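(* Consider Algorithm NCB run with inputs $k\ge2$ and $T$ on an instance with $\mu^*\ge\frac{32\sqrt{k\log k\log T}}{\sqrt T}$. On the event $G$, no arm $j$ with $\mu_j\le\frac{6\sqrt{k\log k\log T}}{\sqrt T}$ is pulled in any round of Phase II.
   Context: Bandit setup: $k$ arms, arm $i$ a distribution on $[0,1]$ with mean $\mu_i$, $\mu^*:=\max_i\mu_i$. $\log$ is the natural logarithm. Canonical model: a $k\times T$ table $(Y_{i,s})$ of independent entries with $Y_{i,s}$ distributed as arm $i$; the $s$-th pull of arm $i$ yields $Y_{i,s}$. Let $\widehat\mu_{i,s}:=\frac1s\sum_{r=1}^sY_{i,r}$. Algorithm NCB (inputs $k,T$): $\widetilde T:=16\sqrt{\frac{kT\log T}{\log k}}$. Phase I: in each round $t\le\widetilde T$ pull a uniformly random arm. Phase II: in each round $\widetilde T<t\le T$ pull an arm maximizing $\mathrm{NCB}_i:=\widehat\mu_i+4\sqrt{\widehat\mu_i\log T/n_i}$, where $n_i$ is the number of pulls of $i$ before the round and $\widehat\mu_i$ its empirical mean (ties arbitrary). Events: $G_1$: every arm is pulled at least $\frac{\widetilde T}{2k}$ times in Phase I. $G_2$: for every arm $i$ with $\mu_i>\frac{6\sqrt{k\log k\log T}}{\sqrt T}$ and every integer $s$ with $\frac{\widetilde T}{2k}\le s\le T$, $|\mu_i-\widehat\mu_{i,s}|\le 3\sqrt{\frac{\mu_i\log T}{s}}$. $G_3$: for every arm $j$ with $\mu_j\le\frac{6\sqrt{k\log k\log T}}{\sqrt T}$ and every integer $s$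 with $\frac{\widetilde T}{2k}\le s\le T$, $\widehat\mu_{j,s}\le \frac{9\sqrt{k\log k\log T}}{\sqrt T}$. $G:=G_1\cap G_2\cap G_3$. *)

theory Defs
  imports Complex_Main
begin

text \<open>Arms are indexed by 0..<k; rounds by 1..T. Y i s is the s-th sample of arm i (s \<ge> 1).
  A run of the algorithm is recorded as the function a : round \<Rightarrow> arm pulled.\<close>

definition muhat :: "(nat \<Rightarrow> nat \<Rightarrow> real) \<Rightarrow> nat \<Rightarrow> nat \<Rightarrow> real" where
  "muhat Y i s = (\<Sum>r=1..s. Y i r) / real s"

definition npulls :: "(nat \<Rightarrow> nat) \<Rightarrow> nat \<Rightarrow> nat \<Rightarrow> nat" where
  "npulls a i t = card {u. 1 \<le> u \<and> u < t \<and> a u = i}"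

definition Ttilde :: "nat \<Rightarrow> nat \<Rightarrow> real" where
  "Ttilde k T = 16 * sqrt (real k * real T * ln (real T) / ln (real k))"

definition ncb_index :: "nat \<Rightarrow> (nat \<Rightarrow> nat \<Rightarrow> real) \<Rightarrow> (nat \<Rightarrow> nat) \<Rightarrow> nat \<Rightarrow> nat \<Rightarrow> real" where
  "ncb_index T Y a i t =
     (let n = npulls a i t; m = muhat Y i n in m + 4 * sqrt (m * ln (real T) / real n))"

text \<open>a is a possible run of NCB with inputs k, T on sample table Y: in Phase I an arbitrary
  (random) arm is pulled; in Phase II an arm maximizing the NCB index (ties arbitrary).\<close>
definition NCB_run :: "nat \<Rightarrow> nat \<Rightarrow> (nat \<Rightarrow> nat \<Rightarrow> real) \<Rightarrow> (nat \<Rightarrow> nat) \<Rightarrow> bool" where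
  "NCB_run k T Y a \<longleftrightarrow>
     (\<forall>t. 1 \<le> t \<and> t \<le> T \<longrightarrow> a t < k) \<and>
     (\<forall>t. 1 \<le> t \<and> t \<le> T \<and> real t > Ttilde k T \<longrightarrow>
         (\<forall>i<k. ncb_index T Y a i t \<le> ncb_index T Y a (a t) t))"

definition thr :: "nat \<Rightarrow> nat \<Rightarrow> real" where
  "thr k T = sqrt (real k * ln (real k) * ln (real T)) / sqrt (real T)"

definition G1 :: "nat \<Rightarrow> nat \<Rightarrow> (nat \<Rightarrow> nat) \<Rightarrow> bool" where
  "G1 k T a \<longleftrightarrow> (\<forall>i<k. real (card {t. 1 \<le> t \<and> t \<le> T \<and> real t \<le> Ttilde k T \<and> a t = i})
                        \<ge> Ttilde k T / (2 * real k))"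

definition G2 :: "nat \<Rightarrow> nat \<Rightarrow> (nat \<Rightarrow> real) \<Rightarrow> (nat \<Rightarrow> nat \<Rightarrow> real) \<Rightarrow> bool" where
  "G2 k T \<mu> Y \<longleftrightarrow> (\<forall>i<k. \<mu> i > 6 * thr k T \<longrightarrow>
      (\<forall>s::nat. Ttilde k T / (2 * real k) \<le> real s \<and> s \<le> T \<longrightarrow>
          \<bar>\<mu> i - muhat Y i s\<bar> \<le> 3 * sqrt (\<mu> i * ln (real T) / real s)))"

definition G3 :: "nat \<Rightarrow> nat \<Rightarrow> (nat \<Rightarrow> real) \<Rightarrow> (nat \<Rightarrow> nat \<Rightarrow> real) \<Rightarrow> bool" where
  "G3 k T \<mu> Y \<longleftrightarrow> (\<forall>j<k. \<mu> j \<le> 6 * thr k T \<longrightarrow>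
      (\<forall>s::nat. Ttilde k T / (2 * real k) \<le> real s \<and> s \<le> T \<longrightarrow>
          muhat Y j s \<le> 9 * thr k T))"

end

theory Submission
  imports Defs
begin

text \<open>After Phase I every arm has at least \<open>n \<ge> Ttilde k T / (2k)\<close> samples, and \<open>Ttilde\<close> is
  tuned so that then \<open>ln T / n \<le> \<theta>/8\<close> with \<open>\<theta> = thr k T\<close>. On \<open>G3\<close> a bad arm has empirical mean
  at most \<open>9\<theta>\<close>, so its index is at most \<open>9\<theta> + 4\<surd>(9\<theta>\<^sup>2/8) \<le> 21\<theta>\<close>; on \<open>G2\<close> a best arm, with
  \<open>\<mu> \<ge> 32\<theta>\<close>, has empirical mean at least \<open>13\<mu>/16 \<ge> 26\<theta>\<close> and hence index at least \<open>26\<theta>\<close>.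
  So a bad arm never maximizes the index.\<close>

lemma thr_pos:
  assumes "k \<ge> 2" "T \<ge> 2"
  shows "thr k T > 0"
  using assms unfolding thr_def by simp

lemma ln_div_le_thr_div_8:
  fixes s :: real
  assumes "k \<ge> 2" "T \<ge> 2" "Ttilde k T / (2 * real k) \<le> s"
  shows "ln (real T) / s \<le> thr k T / 8"
proof -
  define A where "A = sqrt (real k * real T * ln (real T) / ln (real k))"
  have lk: "ln (real k) > 0" and lT: "ln (real T) > 0" and kT: "real k > 0" "real T > 0"
    using assms by auto
  have A_pos: "A > 0" unfolding A_def using lk lT kT by simp
  have thr_A: "thr k T * A = real k * ln (real T)"
  proof -
    have "thr k T * A = sqrt (real k * ln (real k) * ln (real T) / real T
                               * (real k * real T * ln (real T) / ln (real k)))"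
      unfolding thr_def A_def by (simp add: real_sqrt_mult real_sqrt_divide)
    also have "real k * ln (real k) * ln (real T) / real T * (real k * real T * ln (real T) / ln (real k))
        = (real k * ln (real T))\<^sup>2"
      using lk kT by (simp add: field_simps power2_eq_square)
    finally show ?thesis using kT lT by simp
  qed
  have s: "8 * A / real k \<le> s"
    using assms(3) unfolding Ttilde_def A_def[symmetric] by (simp add: field_simps)
  have "0 < 8 * A / real k" using A_pos kT by simp
  then have "ln (real T) / s \<le> ln (real T) / (8 * A / real k)"
    using s lT by (intro divide_left_mono mult_pos_pos) auto
  also have "\<dots> = thr k T * A / (8 * A)" using thr_A kT by (simp add: field_simps)
  also have "\<dots> = thr k T / 8" using A_pos by simp
  finally show ?thesis .
qed

lemma npulls_le: "npulls a i t \<le> t - 1"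
proof -
  have "npulls a i t \<le> card {1..<t}"
    unfolding npulls_def by (intro card_mono) auto
  then show ?thesis by simp
qed

lemma npulls_after_phase_one:
  assumes "G1 k T a" "i < k" "Ttilde k T < real t"
  shows "Ttilde k T / (2 * real k) \<le> real (npulls a i t)"
proof -
  have "card {u. 1 \<le> u \<and> u \<le> T \<and> real u \<le> Ttilde k T \<and> a u = i} \<le> npulls a i t"
    unfolding npulls_def using assms(3) by (intro card_mono) auto
  then show ?thesis
    using assms(1,2) unfolding G1_def by (meson of_nat_le_iff order_trans)
qed

lemma ncb_index_eq:
  "ncb_index T Y a i t =
     muhat Y i (npulls a i t) + 4 * sqrt (muhat Y i (npulls a i t) * (ln (real T) / real (npulls a i t)))"
  unfolding ncb_index_def Let_def by simp

lemma ncb_index_bound_small_mean: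
  fixes m x \<theta> :: real
  assumes "m \<le> 9 * \<theta>" "0 \<le> x" "x \<le> \<theta> / 8"
  shows "m + 4 * sqrt (m * x) \<le> 21 * \<theta>"
proof -
  have \<theta>: "0 \<le> \<theta>" using assms(2,3) by linarith
  have "m * x \<le> 9 * \<theta> * x" using assms(1,2) by (rule mult_right_mono)
  also have "\<dots> \<le> 9 * \<theta> * (\<theta> / 8)" using assms(3) \<theta> by (intro mult_left_mono) auto
  also have "\<dots> \<le> (3 * \<theta>)\<^sup>2" using \<theta> by (simp add: power2_eq_square)
  finally have "sqrt (m * x) \<le> sqrt ((3 * \<theta>)\<^sup>2)" by (rule real_sqrt_le_mono)
  also have "\<dots> = 3 * \<theta>" using \<theta> by (subst real_sqrt_abs) simp
  finally show ?thesis using assms(1) by linarith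
qed

lemma ncb_index_bound_large_mean:
  fixes \<mu> m x \<theta> :: real
  assumes "32 * \<theta> \<le> \<mu>" "0 \<le> \<theta>" "\<bar>\<mu> - m\<bar> \<le> 3 * sqrt (\<mu> * x)" "0 \<le> x" "x \<le> \<theta> / 8"
  shows "26 * \<theta> \<le> m + 4 * sqrt (m * x)"
proof -
  have "\<mu> * x \<le> \<mu> * (\<mu> / 256)"
    using assms by (intro mult_left_mono) auto
  then have "sqrt (\<mu> * x) \<le> sqrt ((\<mu> / 16)\<^sup>2)"
    by (simp add: power2_eq_square real_sqrt_le_mono)
  also have "\<dots> = \<mu> / 16" using assms(1,2) by simp
  finally have m: "26 * \<theta> \<le> m" using assms(1,3) by linarith
  then have "0 \<le> sqrt (m * x)" using assms(2,4) by simp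
  then show ?thesis using m by linarith
qed

theorem lemma3:
  fixes k T :: nat and \<mu> :: "nat \<Rightarrow> real" and Y :: "nat \<Rightarrow> nat \<Rightarrow> real" and a :: "nat \<Rightarrow> nat"
  assumes "k \<ge> 2" and "T \<ge> 2"
    and "\<forall>i<k. 0 \<le> \<mu> i \<and> \<mu> i \<le> 1"
    and "\<forall>i<k. \<forall>s\<ge>1. 0 \<le> Y i s \<and> Y i s \<le> 1"
    and "Max (\<mu> ` {..<k}) \<ge> 32 * thr k T"
    and "NCB_run k T Y a"
    and "G1 k T a" and "G2 k T \<mu> Y" and "G3 k T \<mu> Y"
  shows "\<forall>t. 1 \<le> t \<and> t \<le> T \<and> real t > Ttilde k T \<longrightarrow> \<not> (\<mu> (a t) \<le> 6 * thr k T)"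
proof (intro allI impI notI)
  fix t assume t: "1 \<le> t \<and> t \<le> T \<and> real t > Ttilde k T" and bad: "\<mu> (a t) \<le> 6 * thr k T"
  have window: "Ttilde k T / (2 * real k) \<le> real (npulls a i t) \<and> npulls a i t \<le> T" if "i < k" for i
    using npulls_after_phase_one[OF assms(7) that] npulls_le[of a i t] t by auto
  note ratio = ln_div_le_thr_div_8[OF assms(1,2) window[THEN conjunct1]]
  have x_nonneg: "0 \<le> ln (real T) / real (npulls a i t)" for i using assms(2) by simp
  have "Max (\<mu> ` {..<k}) \<in> \<mu> ` {..<k}"
    using assms(1) by (intro Max_in) (auto simp: lessThan_empty_iff)
  then obtain b where b: "b < k" "\<mu> b = Max (\<mu> ` {..<k})" by auto
  have "a t < k" using assms(6) t unfolding NCB_run_def by auto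
  then have "ncb_index T Y a (a t) t \<le> 21 * thr k T"
    unfolding ncb_index_eq
    using assms(9) bad window ratio x_nonneg by (intro ncb_index_bound_small_mean) (auto simp: G3_def)
  moreover have "26 * thr k T \<le> ncb_index T Y a b t"
    unfolding ncb_index_eq using b assms(5,8) thr_pos[OF assms(1,2)] window ratio x_nonneg
    by (intro ncb_index_bound_large_mean[of "thr k T" "\<mu> b"]) (auto simp: G2_def)
  moreover have "ncb_index T Y a b t \<le> ncb_index T Y a (a t) t"
    using assms(6) t b(1) unfolding NCB_run_def by auto
  ultimately show False using thr_pos[OF assms(1,2)] by linarith
qed

end
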